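(* Let $(\gamma_n)_{n\ge 0}$ be a sequence of positive reals satisfying conditions (C1)–(C7) below, and let $(p_n)$ be the associated symmetric orthonormal polynomials. Then for every $\omega\in\mathbb{R}$ the limits below exist and satisfy \[ \lim_{n\to\infty}\frac{\sum_{k=0}^n p_k^2(\omega)}{\sum_{k=0}^n \frac{1}{\gamma_k}}=\frac12\lim_{n\to\infty}\gamma_n\bigl(p_n^2(\omega)+p_{n+1}^2(\omega)\bigr), \] and the convergence of both limits is uniform on every compact subset of $\mathbb{R}$.
   Context: Given positive reals $\gamma_n>0$ ($n\ge 0$), set $\gamma_{-1}=1$, $p_{-1}(\omega)=0$, $p_0(\omega)=1$, and define polynomials by $\gamma_n p_{n+1}(\omega)=\omega p_n(\omega)-\gamma_{n-1}p_{n-1}(\omega)$ for $n\ge0$. Let $\Delta_n=\gamma_{n+1}-\gamma_n$ and $\Delta^2_n=\Delta_{n+1}-\Delta_n$. The conditions are: (C1) $\gamma_n\to\infty$; (C2) $\Delta_n\to 0$; (C3) there exist $n_0,m_0$ such that $\gamma_{n+m}>\gamma_n$ for all $n\ge n_0$, $m\ge m_0$; (C4) $\sum_{j\ge0}1/\gamma_j=\infty$; (C5) there exists $\kappa>1$ with $\sum_{j\ge0}\gamma_j^{-\kappa}<\infty$; (C6) $\sum_{n\ge0}|\Delta_n|/\gamma_n^2<\infty$; (C7) $\sum_{n\ge0}|\Delta^2_n|/\gamma_n<\infty$. *)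

theory Defs
  imports "HOL-Analysis.Analysis"
begin

text \<open>Orthonormal polynomials p_n(w) attached to gamma via
  gamma_n p_{n+1} = w p_n - gamma_{n-1} p_{n-1}, with p_{-1} = 0, p_0 = 1, gamma_{-1} = 1.
  Hence p_1 = w / gamma_0 and p_{n+2} = (w p_{n+1} - gamma_n p_n) / gamma_{n+1}.\<close>
fun opoly :: "(nat \<Rightarrow> real) \<Rightarrow> nat \<Rightarrow> real \<Rightarrow> real" where
  "opoly g 0 w = 1"
| "opoly g (Suc 0) w = w / g 0"
| "opoly g (Suc (Suc n)) w = (w * opoly g (Suc n) w - g n * opoly g n w) / g (Suc n)"

end

theory Submission
  imports Defs
begin

text \<open>
  Put \<open>F n = \<gamma> n (p n\<^sup>2 + p (n+1)\<^sup>2) - \<omega> p n p (n+1)\<close>. The recurrence gives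
  \<open>\<gamma> (n+1) F (n+1) = \<gamma> n F n + (\<gamma> (n+1)\<^sup>2 - \<gamma> n\<^sup>2) p (n+1)\<^sup>2\<close>, and
  \<open>2 F n \<ge> \<gamma> n (p n\<^sup>2 + p (n+1)\<^sup>2)\<close> as soon as \<open>|\<omega>| \<le> \<gamma> n\<close>. So one step changes \<open>F n\<close> by the
  relative amount \<open>O(\<Delta> n)\<close>, which tends to 0 but need not be summable. Over two steps the first
  order terms cancel and the relative change is
  \<open>O(|\<Delta>\<^sup>2 n| / \<gamma> n + |\<Delta> n| / \<gamma> n\<^sup>2 + |\<Delta> (n+1)| / \<gamma> (n+1)\<^sup>2)\<close>,
  which is summable by (C6) and (C7). Hence \<open>F n\<close> is bounded and converges uniformly on compact
  sets, and so does \<open>\<gamma> n (p n\<^sup>2 + p (n+1)\<^sup>2) / 2\<close>, because \<open>\<omega> p n p (n+1) = O(1 / \<gamma> n)\<close>.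
  Finally, up to a bounded error, \<open>\<Sum>k\<le>n. p k\<^sup>2\<close> is the sum of these quantities with weights
  \<open>1 / \<gamma> k\<close>; the weights have divergent sum by (C4), so the weighted means inherit the limit.
\<close>

lemma abs_mult_le_half_sum_squares: "\<bar>x * y\<bar> \<le> (x\<^sup>2 + y\<^sup>2) / 2" for x y :: real
  using sum_squares_bound[of "\<bar>x\<bar>" "\<bar>y\<bar>"] by (simp add: abs_mult)

lemma abs_mult3_le_half_sum_squares:
  fixes w x y :: real
  assumes "\<bar>w\<bar> \<le> R"
  shows "\<bar>w * x * y\<bar> \<le> R * (x\<^sup>2 + y\<^sup>2) / 2"
proof -
  have "\<bar>w * x * y\<bar> = \<bar>w\<bar> * \<bar>x * y\<bar>" by (simp add: abs_mult)
  also have "\<dots> \<le> R * ((x\<^sup>2 + y\<^sup>2) / 2)"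
    using assms abs_mult_le_half_sum_squares[of x y] by (intro mult_mono) auto
  finally show ?thesis by simp
qed

lemma isCont_imp_bounded_abs_le:
  fixes f :: "real \<Rightarrow> real"
  assumes "\<And>x. isCont f x"
  obtains B where "\<And>x. \<bar>x\<bar> \<le> R \<Longrightarrow> \<bar>f x\<bar> \<le> B"
proof -
  have "bounded (f ` {-R..R})"
    by (intro compact_imp_bounded compact_continuous_image continuous_at_imp_continuous_on
        ballI assms compact_Icc)
  then obtain B where "\<forall>y\<in>f ` {-R..R}. \<bar>y\<bar> \<le> B"
    unfolding bounded_real by blast
  then have "\<bar>f x\<bar> \<le> B" if "\<bar>x\<bar> \<le> R" for x
    using that by (auto simp: abs_le_iff)
  then show ?thesis using that by blast
qed

lemma compact_subset_symmetric_interval: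
  fixes K :: "real set"
  assumes "compact K"
  obtains R where "0 \<le> R" and "K \<subseteq> {-R..R}"
proof -
  obtain a where a: "\<forall>x\<in>K. \<bar>x\<bar> \<le> a"
    using compact_imp_bounded[OF assms] unfolding bounded_real ..
  then have "K \<subseteq> {-max a 0..max a 0}"
    by (force simp: abs_le_iff)
  then show ?thesis using that[of "max a 0"] by simp
qed

lemma filterlim_partial_sums_at_top:
  fixes c :: "nat \<Rightarrow> real"
  assumes nonneg: "\<And>k. 0 \<le> c k" and diverges: "\<not> summable c"
  shows "filterlim (\<lambda>n. \<Sum>k\<le>n. c k) at_top sequentially"
proof (subst filterlim_at_top, intro allI)
  fix Z :: real
  have "\<exists>n. Z \<le> (\<Sum>k\<le>n. c k)"
  proof (rule ccontr)
    assume "\<nexists>n. Z \<le> (\<Sum>k\<le>n. c k)"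
    then have "(\<Sum>k<n. c k) \<le> Z" for n
    proof -
      have "(\<Sum>k<n. c k) \<le> (\<Sum>k\<le>n. c k)"
        using nonneg by (intro sum_mono2) auto
      with \<open>\<nexists>n. Z \<le> (\<Sum>k\<le>n. c k)\<close> show ?thesis by (meson order_trans nle_le)
    qed
    then show False
      using diverges summableI_nonneg_bounded nonneg by blast
  qed
  then obtain n0 where "Z \<le> (\<Sum>k\<le>n0. c k)" ..
  moreover have "(\<Sum>k\<le>n0. c k) \<le> (\<Sum>k\<le>n. c k)" if "n0 \<le> n" for n
    using that nonneg by (intro sum_mono2) auto
  ultimately show "eventually (\<lambda>n. Z \<le> (\<Sum>k\<le>n. c k)) sequentially"
    unfolding eventually_sequentially by (meson order_trans)
qed

lemma weighted_sum_deviation_le: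
  fixes c u :: "nat \<Rightarrow> real"
  assumes "N \<le> n" and nonneg: "\<And>k. 0 \<le> c k" and close: "\<And>k. N \<le> k \<Longrightarrow> \<bar>u k - l\<bar> \<le> \<epsilon>"
  shows "\<bar>(\<Sum>k\<le>n. c k * u k) - l * (\<Sum>k\<le>n. c k)\<bar>
           \<le> \<bar>\<Sum>k<N. c k * (u k - l)\<bar> + \<epsilon> * (\<Sum>k\<le>n. c k)"
proof -
  have "{..n} = {..<N} \<union> {N..n}" using assms(1) by auto
  then have split: "(\<Sum>k\<le>n. f k) = (\<Sum>k<N. f k) + (\<Sum>k=N..n. f k)" for f :: "nat \<Rightarrow> real"
    by (simp add: sum.union_disjoint ivl_disj_int)
  have "\<bar>\<Sum>k=N..n. c k * (u k - l)\<bar> \<le> (\<Sum>k=N..n. c k * \<epsilon>)"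
    using close nonneg by (intro order_trans[OF sum_abs] sum_mono) (auto simp: abs_mult intro!: mult_left_mono)
  also have "\<dots> \<le> \<epsilon> * (\<Sum>k\<le>n. c k)"
    using close[OF order.refl] nonneg
    by (simp add: sum_distrib_left[symmetric] mult.commute[of _ \<epsilon>] mult_left_mono sum_mono2)
  finally have tail: "\<bar>\<Sum>k=N..n. c k * (u k - l)\<bar> \<le> \<epsilon> * (\<Sum>k\<le>n. c k)" .
  have "(\<Sum>k\<le>n. c k * u k) - l * (\<Sum>k\<le>n. c k)
      = (\<Sum>k<N. c k * (u k - l)) + (\<Sum>k=N..n. c k * (u k - l))"
    unfolding split by (simp add: sum_distrib_left algebra_simps sum_subtractf sum.distrib)
  then show ?thesis
    using tail abs_triangle_ineq[of "\<Sum>k<N. c k * (u k - l)" "\<Sum>k=N..n. c k * (u k - l)"]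
    by linarith
qed

lemma uniform_limit_weighted_means:
  fixes u :: "nat \<Rightarrow> 'a::topological_space \<Rightarrow> real"
  assumes lim: "uniform_limit S u L sequentially"
    and bounded: "\<And>k. bounded (u k ` S)"
    and weights: "\<And>k. 0 < c k" and diverges: "\<not> summable c"
    and remainder: "eventually (\<lambda>n. \<forall>w\<in>S. \<bar>r n w\<bar> \<le> B) sequentially"
  shows "uniform_limit S (\<lambda>n w. ((\<Sum>k\<le>n. c k * u k w) + r n w) / (\<Sum>k\<le>n. c k)) L sequentially"
  unfolding uniform_limit_iff
proof (intro allI impI)
  fix e :: real assume e: "0 < e"
  obtain BL where BL: "\<And>w. w \<in> S \<Longrightarrow> \<bar>L w\<bar> \<le> BL"
    using uniform_limit_bounded[OF lim always_eventually] bounded by (auto simp: bounded_real)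
  have "\<forall>k. \<exists>b. \<forall>w\<in>S. \<bar>u k w\<bar> \<le> b"
    using bounded by (simp add: bounded_real)
  then obtain Bu where Bu: "\<And>k w. w \<in> S \<Longrightarrow> \<bar>u k w\<bar> \<le> Bu k"
    by metis
  obtain N where N: "\<And>k w. N \<le> k \<Longrightarrow> w \<in> S \<Longrightarrow> \<bar>u k w - L w\<bar> < e / 2"
    using lim e unfolding uniform_limit_sequentially_iff dist_real_def by (meson half_gt_zero)
  define H where "H = (\<Sum>k<N. c k * (Bu k + BL))"
  have head: "\<bar>\<Sum>k<N. c k * (u k w - L w)\<bar> \<le> H" if w: "w \<in> S" for w
  proof -
    have "\<bar>\<Sum>k<N. c k * (u k w - L w)\<bar> \<le> (\<Sum>k<N. c k * \<bar>u k w - L w\<bar>)"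
      using weights by (auto intro: order_trans[OF sum_abs] simp: abs_mult less_imp_le)
    also have "\<dots> \<le> H"
      unfolding H_def using Bu[OF w] BL[OF w] weights
      by (intro sum_mono mult_left_mono) (auto simp: less_imp_le intro: order_trans[OF abs_triangle_ineq4] add_mono)
    finally show ?thesis .
  qed
  have "filterlim (\<lambda>n. \<Sum>k\<le>n. c k) at_top sequentially"
    using filterlim_partial_sums_at_top weights diverges less_imp_le by metis
  then have "eventually (\<lambda>n. N \<le> n \<and> (\<forall>w\<in>S. \<bar>r n w\<bar> \<le> B)
      \<and> max 0 (2 * (H + B) / e) < (\<Sum>k\<le>n. c k)) sequentially"
    using eventually_ge_at_top remainder unfolding filterlim_at_top_dense
    by (intro eventually_conj) blast+
  then show "eventually (\<lambda>n. \<forall>w\<in>S.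
      dist (((\<Sum>k\<le>n. c k * u k w) + r n w) / (\<Sum>k\<le>n. c k)) (L w) < e) sequentially"
  proof eventually_elim
    case (elim n)
    define T where "T = (\<Sum>k\<le>n. c k)"
    have T: "0 < T" "H + B < T * (e / 2)"
      using elim e by (auto simp: T_def field_simps)
    show ?case
    proof
      fix w assume w: "w \<in> S"
      have "\<bar>(\<Sum>k\<le>n. c k * u k w) - L w * T\<bar> \<le> \<bar>\<Sum>k<N. c k * (u k w - L w)\<bar> + e / 2 * T"
        unfolding T_def using elim weights N[OF _ w]
        by (intro weighted_sum_deviation_le) (auto simp: less_imp_le)
      then have "\<bar>(\<Sum>k\<le>n. c k * u k w) - L w * T\<bar> \<le> H + e / 2 * T"
        using head[OF w] by linarith
      moreover have "\<bar>r n w\<bar> \<le> B" using elim w by blast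
      ultimately have "\<bar>(\<Sum>k\<le>n. c k * u k w) + r n w - L w * T\<bar> < T * e"
        using T by (simp only: abs_le_iff abs_less_iff) argo
      then show "dist (((\<Sum>k\<le>n. c k * u k w) + r n w) / (\<Sum>k\<le>n. c k)) (L w) < e"
        using T unfolding T_def[symmetric] dist_real_def by (simp add: abs_divide field_simps)
    qed
  qed
qed
lemma isCont_opoly: "isCont (opoly g n) w"
  by (induction g n w rule: opoly.induct) (auto simp: divide_inverse intro!: continuous_intros)

lemma sum_opoly_squares:
  "(\<Sum>k\<le>n. (opoly g k w)\<^sup>2)
     = (\<Sum>k\<le>n. ((opoly g k w)\<^sup>2 + (opoly g (Suc k) w)\<^sup>2) / 2) + (1 - (opoly g (Suc n) w)\<^sup>2) / 2"
  by (induction n) (simp_all add: field_simps)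

definition opoly_energy :: "(nat \<Rightarrow> real) \<Rightarrow> nat \<Rightarrow> real \<Rightarrow> real" where
  "opoly_energy g n w =
     g n * ((opoly g n w)\<^sup>2 + (opoly g (Suc n) w)\<^sup>2) - w * opoly g n w * opoly g (Suc n) w"

lemma opoly_energy_Suc:
  assumes "g (Suc n) \<noteq> 0"
  shows "g (Suc n) * opoly_energy g (Suc n) w
           = g n * opoly_energy g n w + ((g (Suc n))\<^sup>2 - (g n)\<^sup>2) * (opoly g (Suc n) w)\<^sup>2"
proof -
  define a b x y z where "a = g n" "b = g (Suc n)"
    "x = opoly g n w" "y = opoly g (Suc n) w" "z = opoly g (Suc (Suc n)) w"
  have rec: "b * z = w * y - a * x"
    using assms by (simp add: a_b_x_y_z_def)
  have "b * (b * (y\<^sup>2 + z\<^sup>2) - w * y * z) = b\<^sup>2 * y\<^sup>2 + (b * z)\<^sup>2 - w * y * (b * z)"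
    by algebra
  also have "\<dots> = a * (a * (x\<^sup>2 + y\<^sup>2) - w * x * y) + (b\<^sup>2 - a\<^sup>2) * y\<^sup>2"
    unfolding rec by algebra
  finally show ?thesis
    by (simp add: opoly_energy_def a_b_x_y_z_def)
qed

lemma opoly_energy_lower:
  assumes "\<bar>w\<bar> \<le> g n"
  shows "g n * ((opoly g n w)\<^sup>2 + (opoly g (Suc n) w)\<^sup>2) \<le> 2 * opoly_energy g n w"
  using abs_le_D1[OF abs_mult3_le_half_sum_squares[OF assms, of "opoly g n w" "opoly g (Suc n) w"]]
  unfolding opoly_energy_def by argo

lemma opoly_energy_nonneg:
  assumes "\<bar>w\<bar> \<le> g n"
  shows "0 \<le> opoly_energy g n w"
proof -
  have "0 \<le> g n * ((opoly g n w)\<^sup>2 + (opoly g (Suc n) w)\<^sup>2)"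
    using assms by simp
  then show ?thesis
    using opoly_energy_lower[of w g n] assms by linarith
qed

lemma isCont_opoly_energy: "isCont (opoly_energy g n) w"
proof -
  have "opoly_energy g n = (\<lambda>w. g n * ((opoly g n w)\<^sup>2 + (opoly g (Suc n) w)\<^sup>2)
                                 - w * opoly g n w * opoly g (Suc n) w)"
    by (rule ext) (simp add: opoly_energy_def)
  then show ?thesis
    by (simp add: isCont_opoly continuous_intros)
qed

text \<open>
  In the following estimates \<open>a, b, c\<close> stand for \<open>\<gamma> n, \<gamma> (n+1), \<gamma> (n+2)\<close>, \<open>x, y, z\<close> for
  \<open>p n, p (n+1), p (n+2)\<close>, and \<open>F, F'\<close> resp. \<open>F0, F2\<close> for consecutive energies.
\<close>

lemma one_step_energy_bound:
  fixes a b y F F' :: real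
  assumes a: "2 \<le> a" and b: "2 \<le> b" and d: "\<bar>b - a\<bar> \<le> 1"
    and step: "b * F' = a * F + (b\<^sup>2 - a\<^sup>2) * y\<^sup>2"
    and lower: "a * y\<^sup>2 \<le> 2 * F"
  shows "\<bar>F' - F\<bar> \<le> 3 * \<bar>b - a\<bar> * F"
proof -
  have ay: "0 \<le> a * y\<^sup>2" using a by simp
  have diff: "b * (F' - F) = (b - a) * ((a + b) * y\<^sup>2 - F)"
    using step by (simp add: algebra_simps power2_eq_square)
  have "(a + b) * y\<^sup>2 \<le> (3 * a) * y\<^sup>2"
    using a d by (intro mult_right_mono) (auto simp: abs_le_iff)
  moreover have "0 \<le> (a + b) * y\<^sup>2"
    using a b by simp
  ultimately have bound: "\<bar>(a + b) * y\<^sup>2 - F\<bar> \<le> 6 * F"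
    using lower ay unfolding mult.assoc by linarith
  have "b * \<bar>F' - F\<bar> = \<bar>b - a\<bar> * \<bar>(a + b) * y\<^sup>2 - F\<bar>"
    using b diff by (metis abs_mult abs_of_nonneg dual_order.trans zero_le_numeral)
  also have "\<dots> \<le> \<bar>b - a\<bar> * (6 * F)"
    using bound by (rule mult_left_mono) simp
  also have "\<dots> \<le> b * (3 * \<bar>b - a\<bar> * F)"
  proof -
    have "6 * (\<bar>b - a\<bar> * F) \<le> (3 * b) * (\<bar>b - a\<bar> * F)"
      using b lower ay by (intro mult_right_mono) auto
    then show ?thesis by (simp add: algebra_simps)
  qed
  finally show ?thesis
    using b by simp
qed

lemma two_step_defect_identity:
  fixes a b c w x y z :: real
  assumes rec: "b * z = w * y - a * x"
  shows "b\<^sup>2 * ((b + c) * z\<^sup>2 - 2 * a * x\<^sup>2)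
           = a * (b * (c - b) - 2 * b * (b - a) - (b - a) * (c - b)) * x\<^sup>2
             - 2 * (b + c) * a * (w * x * y) + (b + c) * w\<^sup>2 * y\<^sup>2"
proof -
  have "b\<^sup>2 * ((b + c) * z\<^sup>2 - 2 * a * x\<^sup>2) = (b + c) * (b * z)\<^sup>2 - 2 * a * b\<^sup>2 * x\<^sup>2"
    by algebra
  also have "\<dots> = a * (b * (c - b) - 2 * b * (b - a) - (b - a) * (c - b)) * x\<^sup>2
             - 2 * (b + c) * a * (w * x * y) + (b + c) * w\<^sup>2 * y\<^sup>2"
    unfolding rec by algebra
  finally show ?thesis .
qed

lemma two_step_defect_coefficient_bound:
  fixes a b c :: real
  assumes b: "1 \<le> b" and d1: "\<bar>b - a\<bar> \<le> 1" and d2: "\<bar>c - b\<bar> \<le> 1"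
  shows "\<bar>b * (c - b) - 2 * b * (b - a) - (b - a) * (c - b)\<bar> \<le> 4 * b"
proof -
  have "\<bar>b * (c - b) - 2 * b * (b - a) - (b - a) * (c - b)\<bar>
      \<le> b * \<bar>c - b\<bar> + 2 * b * \<bar>b - a\<bar> + \<bar>b - a\<bar> * \<bar>c - b\<bar>"
    using b by (simp add: abs_mult order_trans[OF abs_triangle_ineq4] abs_triangle_ineq)
  also have "\<dots> \<le> b * 1 + 2 * b * 1 + 1 * 1"
    using b d1 d2 by (intro add_mono mult_mono) auto
  finally show ?thesis using b by linarith
qed

text \<open>Since \<open>z \<approx> -(a/b) x\<close>, the quantity \<open>(b + c) z\<^sup>2\<close> is close to \<open>2 a x\<^sup>2\<close>.\<close>

lemma two_step_defect_bound:
  fixes a b c w x y z R :: real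
  assumes a: "2 \<le> a" and b: "2 \<le> b" and d1: "\<bar>b - a\<bar> \<le> 1" and d2: "\<bar>c - b\<bar> \<le> 1"
    and w: "\<bar>w\<bar> \<le> R" and Ra: "R \<le> a"
    and rec: "b * z = w * y - a * x"
  shows "\<bar>(b + c) * z\<^sup>2 - 2 * a * x\<^sup>2\<bar> \<le> (4 + 6 * R) * (a / b) * (x\<^sup>2 + y\<^sup>2)"
proof -
  define S where "S = x\<^sup>2 + y\<^sup>2"
  define k where "k = b * (c - b) - 2 * b * (b - a) - (b - a) * (c - b)"
  have R0: "0 \<le> R" using w by linarith
  have bc: "0 \<le> b + c" "b + c \<le> 3 * b" using b d2 by (auto simp: abs_le_iff)
  have k: "\<bar>k\<bar> \<le> 4 * b"
    unfolding k_def using b d1 d2 by (intro two_step_defect_coefficient_bound) auto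
  have t1: "\<bar>a * k * x\<^sup>2\<bar> \<le> 4 * a * b * S"
  proof -
    have "\<bar>a * k * x\<^sup>2\<bar> = a * \<bar>k\<bar> * x\<^sup>2" using a by (simp add: abs_mult)
    also have "\<dots> \<le> a * (4 * b) * S"
      unfolding S_def using a k by (intro mult_mono) auto
    finally show ?thesis by simp
  qed
  have t2: "\<bar>2 * (b + c) * a * (w * x * y)\<bar> \<le> 3 * a * b * R * S"
  proof -
    have "\<bar>2 * (b + c) * a * (w * x * y)\<bar> = 2 * (b + c) * a * \<bar>w * x * y\<bar>"
      using a bc by (simp add: abs_mult)
    also have "\<dots> \<le> 2 * (3 * b) * a * (R * S / 2)"
      unfolding S_def using a bc abs_mult3_le_half_sum_squares[OF w]
      by (intro mult_mono) auto
    finally show ?thesis by (simp add: mult_ac)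
  qed
  have t3: "\<bar>(b + c) * w\<^sup>2 * y\<^sup>2\<bar> \<le> 3 * a * b * R * S"
  proof -
    have "w\<^sup>2 \<le> R\<^sup>2"
      using w R0 abs_le_square_iff[of w R] by simp
    also have "\<dots> \<le> a * R"
      using Ra R0 unfolding power2_eq_square by (rule mult_right_mono)
    finally have "(b + c) * w\<^sup>2 \<le> (3 * b) * (a * R)"
      using bc by (intro mult_mono) auto
    moreover have "y\<^sup>2 \<le> S" unfolding S_def by simp
    moreover have "0 \<le> (3 * b) * (a * R)" using a b R0 by simp
    ultimately have "(b + c) * w\<^sup>2 * y\<^sup>2 \<le> (3 * b) * (a * R) * S"
      by (rule mult_mono) auto
    then show ?thesis using bc by (simp add: abs_mult mult_ac)
  qed
  have "b\<^sup>2 * \<bar>(b + c) * z\<^sup>2 - 2 * a * x\<^sup>2\<bar>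
      = \<bar>a * k * x\<^sup>2 - 2 * (b + c) * a * (w * x * y) + (b + c) * w\<^sup>2 * y\<^sup>2\<bar>"
    unfolding k_def two_step_defect_identity[OF rec, symmetric] by (simp add: abs_mult)
  also have "\<dots> \<le> (4 + 6 * R) * a * b * S"
    using t1 t2 t3 abs_triangle_ineq abs_triangle_ineq4 by (simp add: algebra_simps)
  finally have "\<bar>(b + c) * z\<^sup>2 - 2 * a * x\<^sup>2\<bar> \<le> (4 + 6 * R) * a * b * S / b\<^sup>2"
    using b by (simp add: pos_le_divide_eq mult.commute)
  also have "\<dots> = (4 + 6 * R) * (a / b) * S"
    using b by (simp add: power2_eq_square)
  finally show ?thesis unfolding S_def .
qed

lemma two_step_energy_decomposition:
  fixes a b c w x y z F0 F2 :: real
  assumes F0: "F0 = a * (x\<^sup>2 + y\<^sup>2) - w * x * y"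
    and step: "c * F2 = a * F0 + (b\<^sup>2 - a\<^sup>2) * y\<^sup>2 + (c\<^sup>2 - b\<^sup>2) * z\<^sup>2"
  shows "c * (F2 - F0) = ((b - a) - (c - b)) * a * (y\<^sup>2 - x\<^sup>2)
           + (b - a) * ((b - a) * y\<^sup>2 + w * x * y)
           + (c - b) * (((b + c) * z\<^sup>2 - 2 * a * x\<^sup>2) + w * x * y)"
proof -
  have "c * (F2 - F0) = (a - c) * F0 + (b\<^sup>2 - a\<^sup>2) * y\<^sup>2 + (c\<^sup>2 - b\<^sup>2) * z\<^sup>2"
    using step by (simp add: algebra_simps)
  also have "\<dots> = ((b - a) - (c - b)) * a * (y\<^sup>2 - x\<^sup>2)
           + (b - a) * ((b - a) * y\<^sup>2 + w * x * y)
           + (c - b) * (((b + c) * z\<^sup>2 - 2 * a * x\<^sup>2) + w * x * y)"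
    unfolding F0 by (simp add: algebra_simps power2_eq_square)
  finally show ?thesis .
qed

text \<open>
  In the decomposition only the first term is of the size of \<open>F0\<close>, and it carries the second
  difference \<open>(c - b) - (b - a)\<close>; the two others gain a factor \<open>1/a\<close> resp. \<open>1/b\<close>.
\<close>

lemma two_step_energy_difference:
  fixes a b c w x y z R F0 F2 :: real
  assumes a: "2 \<le> a" and b: "2 \<le> b" and c: "2 \<le> c"
    and d1: "\<bar>b - a\<bar> \<le> 1" and d2: "\<bar>c - b\<bar> \<le> 1"
    and w: "\<bar>w\<bar> \<le> R" and Ra: "R \<le> a"
    and rec: "b * z = w * y - a * x"
    and F0: "F0 = a * (x\<^sup>2 + y\<^sup>2) - w * x * y"
    and step: "c * F2 = a * F0 + (b\<^sup>2 - a\<^sup>2) * y\<^sup>2 + (c\<^sup>2 - b\<^sup>2) * z\<^sup>2"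
  shows "c * \<bar>F2 - F0\<bar>
           \<le> (4 + 7 * R) * (\<bar>(c - b) - (b - a)\<bar> + \<bar>b - a\<bar> / a + \<bar>c - b\<bar> / b) * (a * (x\<^sup>2 + y\<^sup>2))"
proof -
  define S where "S = x\<^sup>2 + y\<^sup>2"
  have R0: "0 \<le> R" using w by linarith
  have S0: "0 \<le> S" unfolding S_def by simp
  have wxy: "\<bar>w * x * y\<bar> \<le> R * S / 2"
    unfolding S_def by (rule abs_mult3_le_half_sum_squares[OF w])
  have i1: "\<bar>y\<^sup>2 - x\<^sup>2\<bar> \<le> S"
    unfolding S_def by (simp add: abs_le_iff)
  have i2: "\<bar>(b - a) * y\<^sup>2 + w * x * y\<bar> \<le> (4 + 7 * R) * S"
  proof -
    have "\<bar>b - a\<bar> * y\<^sup>2 \<le> 1 * S"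
      using d1 unfolding S_def by (intro mult_mono) auto
    then have "\<bar>(b - a) * y\<^sup>2 + w * x * y\<bar> \<le> S + R * S / 2"
      using wxy abs_triangle_ineq[of "(b - a) * y\<^sup>2" "w * x * y"] by (simp add: abs_mult)
    also have "\<dots> \<le> (4 + 7 * R) * S"
      using mult_nonneg_nonneg[OF R0 S0] S0 by (simp add: algebra_simps)
    finally show ?thesis .
  qed
  have i3: "\<bar>((b + c) * z\<^sup>2 - 2 * a * x\<^sup>2) + w * x * y\<bar> \<le> (4 + 7 * R) * (a / b * S)"
  proof -
    have "1 / 2 \<le> a / b" using a b d1 by (simp add: field_simps abs_le_iff)
    then have "R * S * (1 / 2) \<le> R * S * (a / b)"
      using R0 S0 by (intro mult_left_mono) auto
    then show ?thesis
      using two_step_defect_bound[OF a b d1 d2 w Ra rec] wxy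
        abs_triangle_ineq[of "(b + c) * z\<^sup>2 - 2 * a * x\<^sup>2" "w * x * y"]
      unfolding S_def[symmetric] by (simp add: algebra_simps)
  qed
  have "c * \<bar>F2 - F0\<bar> = \<bar>c * (F2 - F0)\<bar>" using c by (simp add: abs_mult)
  also have "\<dots> = \<bar>((b - a) - (c - b)) * a * (y\<^sup>2 - x\<^sup>2)
      + (b - a) * ((b - a) * y\<^sup>2 + w * x * y)
      + (c - b) * (((b + c) * z\<^sup>2 - 2 * a * x\<^sup>2) + w * x * y)\<bar>"
    unfolding two_step_energy_decomposition[OF F0 step] ..
  also have "\<dots> \<le> \<bar>((b - a) - (c - b)) * a * (y\<^sup>2 - x\<^sup>2)\<bar>
      + \<bar>(b - a) * ((b - a) * y\<^sup>2 + w * x * y)\<bar>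
      + \<bar>(c - b) * (((b + c) * z\<^sup>2 - 2 * a * x\<^sup>2) + w * x * y)\<bar>"
    by (rule order_trans[OF abs_triangle_ineq add_mono[OF abs_triangle_ineq order_refl]])
  also have "\<dots> = \<bar>(c - b) - (b - a)\<bar> * (a * \<bar>y\<^sup>2 - x\<^sup>2\<bar>)
      + \<bar>b - a\<bar> * \<bar>(b - a) * y\<^sup>2 + w * x * y\<bar>
      + \<bar>c - b\<bar> * \<bar>((b + c) * z\<^sup>2 - 2 * a * x\<^sup>2) + w * x * y\<bar>"
    unfolding abs_mult abs_minus_commute[of "b - a" "c - b"] using a by simp
  also have "\<dots> \<le> \<bar>(c - b) - (b - a)\<bar> * (a * S) + \<bar>b - a\<bar> * ((4 + 7 * R) * S)
      + \<bar>c - b\<bar> * ((4 + 7 * R) * (a / b * S))"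
    using i1 i2 i3 a by (intro add_mono mult_left_mono) auto
  also have "\<dots> \<le> (4 + 7 * R) * (\<bar>(c - b) - (b - a)\<bar> + \<bar>b - a\<bar> / a + \<bar>c - b\<bar> / b) * (a * S)"
  proof -
    have "1 * (\<bar>(c - b) - (b - a)\<bar> * (a * S)) \<le> (4 + 7 * R) * (\<bar>(c - b) - (b - a)\<bar> * (a * S))"
      using R0 S0 a by (intro mult_right_mono) auto
    then show ?thesis
      using a b by (simp add: algebra_simps)
  qed
  finally show ?thesis unfolding S_def .
qed

lemma two_step_energy_bound:
  fixes a b c w x y z R F0 F2 :: real
  assumes a: "2 \<le> a" and b: "2 \<le> b" and c: "2 \<le> c"
    and d1: "\<bar>b - a\<bar> \<le> 1" and d2: "\<bar>c - b\<bar> \<le> 1"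
    and w: "\<bar>w\<bar> \<le> R" and Ra: "R \<le> a"
    and rec: "b * z = w * y - a * x"
    and F0: "F0 = a * (x\<^sup>2 + y\<^sup>2) - w * x * y"
    and step: "c * F2 = a * F0 + (b\<^sup>2 - a\<^sup>2) * y\<^sup>2 + (c\<^sup>2 - b\<^sup>2) * z\<^sup>2"
  shows "\<bar>F2 - F0\<bar>
           \<le> (16 + 28 * R) * (\<bar>(c - b) - (b - a)\<bar> / a + \<bar>b - a\<bar> / a\<^sup>2 + \<bar>c - b\<bar> / b\<^sup>2) * F0"
proof -
  define W where "W = \<bar>(c - b) - (b - a)\<bar> + \<bar>b - a\<bar> / a + \<bar>c - b\<bar> / b"
  define V where "V = \<bar>(c - b) - (b - a)\<bar> / a + \<bar>b - a\<bar> / a\<^sup>2 + \<bar>c - b\<bar> / b\<^sup>2"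
  have R0: "0 \<le> R" using w by linarith
  have W0: "0 \<le> W" unfolding W_def using a b by simp
  have V0: "0 \<le> V" unfolding V_def using a by simp
  have lower: "a * (x\<^sup>2 + y\<^sup>2) \<le> 2 * F0"
    using abs_le_D1[OF abs_mult3_le_half_sum_squares[OF w, of x y]] mult_right_mono[OF Ra, of "x\<^sup>2 + y\<^sup>2"]
    unfolding F0 by simp
  have W_le: "W \<le> 2 * c * V"
  proof -
    have ac: "a \<le> 2 * c" and bc: "b \<le> 2 * c" using c d1 d2 by (auto simp: abs_le_iff)
    have "\<bar>(c - b) - (b - a)\<bar> = a * (\<bar>(c - b) - (b - a)\<bar> / a)"
      and "\<bar>b - a\<bar> / a = a * (\<bar>b - a\<bar> / a\<^sup>2)"
      and "\<bar>c - b\<bar> / b = b * (\<bar>c - b\<bar> / b\<^sup>2)"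
      using a b by (simp_all add: power2_eq_square)
    moreover have "a * (\<bar>(c - b) - (b - a)\<bar> / a) \<le> 2 * c * (\<bar>(c - b) - (b - a)\<bar> / a)"
      using a by (intro mult_right_mono[OF ac]) simp
    moreover have "a * (\<bar>b - a\<bar> / a\<^sup>2) \<le> 2 * c * (\<bar>b - a\<bar> / a\<^sup>2)"
      by (intro mult_right_mono[OF ac]) simp
    moreover have "b * (\<bar>c - b\<bar> / b\<^sup>2) \<le> 2 * c * (\<bar>c - b\<bar> / b\<^sup>2)"
      by (intro mult_right_mono[OF bc]) simp
    ultimately show ?thesis
      unfolding W_def V_def distrib_left by linarith
  qed
  have "c * \<bar>F2 - F0\<bar> \<le> (4 + 7 * R) * W * (a * (x\<^sup>2 + y\<^sup>2))"
    unfolding W_def by (rule two_step_energy_difference[OF a b c d1 d2 w Ra rec F0 step])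
  also have "\<dots> \<le> (4 + 7 * R) * (2 * c * V) * (2 * F0)"
  proof (rule mult_mono)
    show "(4 + 7 * R) * W \<le> (4 + 7 * R) * (2 * c * V)"
      using R0 W_le by (intro mult_left_mono) auto
    show "0 \<le> (4 + 7 * R) * (2 * c * V)"
      using R0 V0 c by simp
  qed (use lower a in simp_all)
  also have "\<dots> = c * ((16 + 28 * R) * V * F0)"
    by (simp add: algebra_simps)
  finally show ?thesis
    using c unfolding V_def[symmetric] by simp
qed

locale jacobi_parameters =
  fixes g :: "nat \<Rightarrow> real"
  assumes pos: "\<And>n. 0 < g n"
    and tendsto_at_top: "filterlim g at_top sequentially"
    and diff_tendsto_0: "(\<lambda>n. g (Suc n) - g n) \<longlonglongrightarrow> 0"
    and summable_diff: "summable (\<lambda>n. \<bar>g (Suc n) - g n\<bar> / (g n)\<^sup>2)"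
    and summable_diff2:
      "summable (\<lambda>n. \<bar>(g (Suc (Suc n)) - g (Suc n)) - (g (Suc n) - g n)\<bar> / g n)"
begin

lemma nonzero [simp]: "g n \<noteq> 0"
  using pos[of n] by simp

text \<open>\<open>regular R k\<close> collects the hypotheses of the estimates above at index \<open>k\<close>, for \<open>|w| \<le> R\<close>.\<close>

definition regular :: "real \<Rightarrow> nat \<Rightarrow> bool" where
  "regular R k \<longleftrightarrow> max 2 R \<le> g k \<and> \<bar>g (Suc k) - g k\<bar> \<le> 1"

lemma eventually_regular: "eventually (regular R) sequentially"
proof -
  have "eventually (\<lambda>k. max 2 R \<le> g k) sequentially"
    using tendsto_at_top unfolding filterlim_at_top by blast
  moreover have "eventually (\<lambda>k. \<bar>g (Suc k) - g k\<bar> < 1) sequentially"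
    using diff_tendsto_0 unfolding tendsto_iff by (auto simp: dist_real_def)
  ultimately show ?thesis
    unfolding regular_def by eventually_elim auto
qed

definition variation :: "nat \<Rightarrow> real" where
  "variation n = \<bar>(g (Suc (Suc n)) - g (Suc n)) - (g (Suc n) - g n)\<bar> / g n
     + \<bar>g (Suc n) - g n\<bar> / (g n)\<^sup>2 + \<bar>g (Suc (Suc n)) - g (Suc n)\<bar> / (g (Suc n))\<^sup>2"

lemma variation_nonneg: "0 \<le> variation n"
  unfolding variation_def using pos[of n] by simp

lemma summable_variation: "summable variation"
  unfolding variation_def
  using summable_diff2 summable_diff summable_diff[THEN summable_ignore_initial_segment, of 1]
  by (intro summable_add) simp_all

lemma energy_Suc_diff:
  assumes "regular R n" "regular R (Suc n)" and w: "\<bar>w\<bar> \<le> R"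
  shows "\<bar>opoly_energy g (Suc n) w - opoly_energy g n w\<bar>
           \<le> 3 * \<bar>g (Suc n) - g n\<bar> * opoly_energy g n w"
proof (rule one_step_energy_bound)
  have "g n * (opoly g (Suc n) w)\<^sup>2 \<le> g n * ((opoly g n w)\<^sup>2 + (opoly g (Suc n) w)\<^sup>2)"
    using pos[of n] by (intro mult_left_mono) auto
  also have "\<dots> \<le> 2 * opoly_energy g n w"
    using assms by (intro opoly_energy_lower) (auto simp: regular_def)
  finally show "g n * (opoly g (Suc n) w)\<^sup>2 \<le> 2 * opoly_energy g n w" .
qed (use assms in \<open>auto simp: regular_def opoly_energy_Suc\<close>)

lemma energy_Suc_Suc_diff:
  assumes "regular R n" "regular R (Suc n)" "regular R (Suc (Suc n))" and w: "\<bar>w\<bar> \<le> R"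
  shows "\<bar>opoly_energy g (Suc (Suc n)) w - opoly_energy g n w\<bar>
           \<le> (16 + 28 * R) * variation n * opoly_energy g n w"
  unfolding variation_def
proof (rule two_step_energy_bound)
  have "g (Suc (Suc n)) * opoly_energy g (Suc (Suc n)) w = g (Suc n) * opoly_energy g (Suc n) w
      + ((g (Suc (Suc n)))\<^sup>2 - (g (Suc n))\<^sup>2) * (opoly g (Suc (Suc n)) w)\<^sup>2"
    by (rule opoly_energy_Suc) simp
  moreover have "g (Suc n) * opoly_energy g (Suc n) w = g n * opoly_energy g n w
      + ((g (Suc n))\<^sup>2 - (g n)\<^sup>2) * (opoly g (Suc n) w)\<^sup>2"
    by (rule opoly_energy_Suc) simp
  ultimately show "g (Suc (Suc n)) * opoly_energy g (Suc (Suc n)) w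
      = g n * opoly_energy g n w + ((g (Suc n))\<^sup>2 - (g n)\<^sup>2) * (opoly g (Suc n) w)\<^sup>2
        + ((g (Suc (Suc n)))\<^sup>2 - (g (Suc n))\<^sup>2) * (opoly g (Suc (Suc n)) w)\<^sup>2"
    by linarith
  show "g (Suc n) * opoly g (Suc (Suc n)) w = w * opoly g (Suc n) w - g n * opoly g n w"
    by simp
qed (use assms in \<open>auto simp: regular_def opoly_energy_def\<close>)

lemma energy_le_exp_variation:
  assumes N: "\<forall>k\<ge>N. regular R k" and w: "\<bar>w\<bar> \<le> R" and "N \<le> n"
    and init: "opoly_energy g N w \<le> M" "opoly_energy g (Suc N) w \<le> M" and M: "0 \<le> M"
  shows "opoly_energy g n w \<le> M * exp ((16 + 28 * R) * (\<Sum>i\<in>{N..<n}. variation i))"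
  using \<open>N \<le> n\<close>
proof (induction n rule: less_induct)
  case (less n)
  define K where "K = 16 + 28 * R"
  have K: "0 \<le> K" using w unfolding K_def by linarith
  have exp_ge: "M \<le> M * exp (K * (\<Sum>i\<in>{N..<n}. variation i))"
  proof -
    have "1 \<le> exp (K * (\<Sum>i\<in>{N..<n}. variation i))"
      using K variation_nonneg by (simp add: sum_nonneg)
    then show ?thesis using M by (simp add: mult_le_cancel_left1)
  qed
  consider "n = N" | "n = Suc N" | m where "n = Suc (Suc m)" "N \<le> m"
    using less.prems by (metis Suc_le_D le_Suc_eq le_antisym not_less_eq_eq)
  then show ?case
  proof cases
    case 1
    show ?thesis using init(1) exp_ge unfolding 1 K_def by linarith
  next
    case 2
    show ?thesis using init(2) exp_ge unfolding 2 K_def by linarith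
  next
    case 3
    have regular: "regular R m" "regular R (Suc m)" "regular R (Suc (Suc m))"
      using N 3(2) by auto
    have Em: "0 \<le> opoly_energy g m w"
      using regular(1) w by (intro opoly_energy_nonneg) (auto simp: regular_def)
    have "opoly_energy g n w \<le> (1 + K * variation m) * opoly_energy g m w"
      using energy_Suc_Suc_diff[OF regular w] 3(1) unfolding K_def
      by (simp add: abs_le_iff algebra_simps)
    also have "\<dots> \<le> exp (K * variation m) * opoly_energy g m w"
      using Em by (intro mult_right_mono) auto
    also have "\<dots> \<le> exp (K * variation m) * (M * exp (K * (\<Sum>i\<in>{N..<m}. variation i)))"
      using less.IH[of m] 3 unfolding K_def by (intro mult_left_mono) auto
    also have "\<dots> \<le> M * exp (K * (\<Sum>i\<in>{N..<n}. variation i))"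
    proof -
      have "(\<Sum>i\<in>{N..<n}. variation i)
          = (\<Sum>i\<in>{N..<m}. variation i) + variation m + variation (Suc m)"
        using 3 by simp
      then show ?thesis
        using M K variation_nonneg[of "Suc m"]
        by (simp add: mult_exp_exp[symmetric] algebra_simps mult_left_mono)
    qed
    finally show ?thesis unfolding K_def .
  qed
qed

lemma energy_bounded:
  assumes N: "\<forall>k\<ge>N. regular R k"
  obtains M where "0 \<le> M" and "\<And>n w. N \<le> n \<Longrightarrow> \<bar>w\<bar> \<le> R \<Longrightarrow> opoly_energy g n w \<le> M"
proof -
  obtain B0 B1 where B0: "\<And>w. \<bar>w\<bar> \<le> R \<Longrightarrow> \<bar>opoly_energy g N w\<bar> \<le> B0"
    and B1: "\<And>w. \<bar>w\<bar> \<le> R \<Longrightarrow> \<bar>opoly_energy g (Suc N) w\<bar> \<le> B1"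
    using isCont_imp_bounded_abs_le[OF isCont_opoly_energy] by metis
  define M0 where "M0 = max 0 (max B0 B1)"
  define M where "M = M0 * exp ((16 + 28 * R) * suminf variation)"
  have "opoly_energy g n w \<le> M" if "N \<le> n" "\<bar>w\<bar> \<le> R" for n w
  proof -
    have R: "0 \<le> R" using that by linarith
    have "opoly_energy g n w \<le> M0 * exp ((16 + 28 * R) * (\<Sum>i\<in>{N..<n}. variation i))"
      using N that abs_le_D1[OF B0[OF that(2)]] abs_le_D1[OF B1[OF that(2)]]
      by (intro energy_le_exp_variation) (auto simp: M0_def)
    also have "\<dots> \<le> M"
      unfolding M_def using R summable_variation variation_nonneg
      by (auto simp: M0_def intro!: mult_left_mono sum_le_suminf)
    finally show ?thesis .
  qed
  moreover have "0 \<le> M" unfolding M_def M0_def by simp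
  ultimately show ?thesis using that by blast
qed

lemma energy_even_steps:
  assumes N: "\<forall>k\<ge>N. regular R k"
    and M: "\<And>n w. N \<le> n \<Longrightarrow> \<bar>w\<bar> \<le> R \<Longrightarrow> opoly_energy g n w \<le> M"
    and n: "N \<le> n" and w: "\<bar>w\<bar> \<le> R" and M0: "0 \<le> M"
  shows "\<bar>opoly_energy g (n + 2 * j) w - opoly_energy g n w\<bar>
           \<le> (16 + 28 * R) * M * (\<Sum>i\<in>{n..<n + 2 * j}. variation i)"
proof (induction j)
  case 0
  then show ?case by simp
next
  case (Suc j)
  define m where "m = n + 2 * j"
  have regular: "regular R m" "regular R (Suc m)" "regular R (Suc (Suc m))"
    using N n unfolding m_def by auto
  have R: "0 \<le> R" using w by linarith
  have "\<bar>opoly_energy g (Suc (Suc m)) w - opoly_energy g m w\<bar>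
      \<le> (16 + 28 * R) * variation m * opoly_energy g m w"
    by (rule energy_Suc_Suc_diff[OF regular w])
  also have "\<dots> \<le> (16 + 28 * R) * variation m * M"
    using M n w R variation_nonneg[of m] unfolding m_def by (intro mult_left_mono) auto
  finally have step: "\<bar>opoly_energy g (Suc (Suc m)) w - opoly_energy g m w\<bar>
      \<le> (16 + 28 * R) * M * variation m" by (simp add: mult_ac)
  have "0 \<le> (16 + 28 * R) * M * variation (Suc m)"
    using R M0 variation_nonneg by simp
  moreover have "(\<Sum>i\<in>{n..<n + 2 * Suc j}. variation i)
      = (\<Sum>i\<in>{n..<m}. variation i) + variation m + variation (Suc m)"
    unfolding m_def by simp
  ultimately show ?case
    using step Suc.IH unfolding m_def by (simp add: algebra_simps abs_le_iff)
qed

lemma energy_oscillation: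
  assumes N: "\<forall>k\<ge>N. regular R k"
    and M: "\<And>n w. N \<le> n \<Longrightarrow> \<bar>w\<bar> \<le> R \<Longrightarrow> opoly_energy g n w \<le> M" and M0: "0 \<le> M"
    and m: "N \<le> m" and mn: "m \<le> n" and w: "\<bar>w\<bar> \<le> R"
  shows "\<bar>opoly_energy g n w - opoly_energy g m w\<bar>
           \<le> (16 + 28 * R) * M * (\<Sum>i\<in>{m..<n}. variation i) + 3 * M * \<bar>g (Suc m) - g m\<bar>"
proof -
  define K where "K = (16 + 28 * R) * M"
  have K: "0 \<le> K" using w M0 unfolding K_def by simp
  define j where "j = (n - m) div 2"
  have "n = m + 2 * j \<or> n = Suc m + 2 * j"
    using mn unfolding j_def by presburger
  then consider (even) "n = m + 2 * j" | (odd) "n = Suc m + 2 * j" "m < n"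
    by fastforce
  then show ?thesis
  proof cases
    case even
    have "0 \<le> 3 * M * \<bar>g (Suc m) - g m\<bar>" using M0 by simp
    then show ?thesis
      using energy_even_steps[OF N M m w M0, of j] even by simp
  next
    case odd
    have "\<bar>opoly_energy g n w - opoly_energy g (Suc m) w\<bar> \<le> K * (\<Sum>i\<in>{Suc m..<n}. variation i)"
      using energy_even_steps[OF N M _ w M0, of "Suc m" j] m odd unfolding K_def by simp
    also have "\<dots> \<le> K * (\<Sum>i\<in>{m..<n}. variation i)"
      using K variation_nonneg by (intro mult_left_mono sum_mono2) auto
    finally have far: "\<bar>opoly_energy g n w - opoly_energy g (Suc m) w\<bar>
        \<le> K * (\<Sum>i\<in>{m..<n}. variation i)" .
    have "\<bar>opoly_energy g (Suc m) w - opoly_energy g m w\<bar>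
        \<le> 3 * \<bar>g (Suc m) - g m\<bar> * opoly_energy g m w"
      using N m w by (intro energy_Suc_diff) auto
    also have "\<dots> \<le> 3 * \<bar>g (Suc m) - g m\<bar> * M"
      using M m w by (intro mult_left_mono) auto
    finally show ?thesis
      using far unfolding K_def by (simp add: abs_le_iff algebra_simps)
  qed
qed

lemma uniformly_Cauchy_energy:
  assumes R: "0 \<le> R"
  shows "uniformly_Cauchy_on {-R..R} (opoly_energy g)"
proof (rule uniformly_Cauchy_onI')
  fix e :: real assume e: "0 < e"
  obtain N where N: "\<forall>k\<ge>N. regular R k"
    using eventually_regular[of R] unfolding eventually_sequentially by blast
  obtain M where M0: "0 \<le> M" and M: "\<And>n w. N \<le> n \<Longrightarrow> \<bar>w\<bar> \<le> R \<Longrightarrow> opoly_energy g n w \<le> M"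
    using energy_bounded[OF N] by blast
  define K where "K = (16 + 28 * R) * M"
  have K: "0 \<le> K" using R M0 unfolding K_def by simp
  have "0 < e / (2 * (K + 1))" using e K by simp
  then obtain N1 where N1': "\<forall>m\<ge>N1. \<forall>n. norm (\<Sum>i\<in>{m..<n}. variation i) < e / (2 * (K + 1))"
    using summable_variation unfolding summable_Cauchy by blast
  have N1: "K * (\<Sum>i\<in>{m..<n}. variation i) < e / 2" if "N1 \<le> m" for m n
  proof -
    have "(\<Sum>i\<in>{m..<n}. variation i) \<le> e / (2 * (K + 1))"
      using N1'[rule_format, OF that, of n] abs_ge_self[of "\<Sum>i\<in>{m..<n}. variation i"] by simp
    then have "K * (\<Sum>i\<in>{m..<n}. variation i) \<le> K * (e / (2 * (K + 1)))"
      using K by (rule mult_left_mono)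
    also have "\<dots> < e / 2"
      using K e by (simp add: field_simps)
    finally show ?thesis .
  qed
  have "0 < e / (6 * (M + 1))" using e M0 by simp
  then obtain N2 where N2': "\<forall>m\<ge>N2. dist (g (Suc m) - g m) 0 < e / (6 * (M + 1))"
    using diff_tendsto_0 unfolding LIMSEQ_def by blast
  have N2: "3 * M * \<bar>g (Suc m) - g m\<bar> < e / 2" if "N2 \<le> m" for m
  proof -
    have "\<bar>g (Suc m) - g m\<bar> \<le> e / (6 * (M + 1))"
      using N2' that by (fastforce simp: dist_real_def)
    then have "3 * M * \<bar>g (Suc m) - g m\<bar> \<le> 3 * M * (e / (6 * (M + 1)))"
      using M0 by (intro mult_left_mono) auto
    also have "\<dots> < e / 2"
      using M0 e by (simp add: field_simps)
    finally show ?thesis .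
  qed
  show "\<exists>L. \<forall>w\<in>{-R..R}. \<forall>m\<ge>L. \<forall>n>m. dist (opoly_energy g m w) (opoly_energy g n w) < e"
  proof (intro exI ballI allI impI)
    fix w m n assume w: "w \<in> {-R..R}" and m: "max N (max N1 N2) \<le> m" and mn: "m < n"
    have "\<bar>opoly_energy g n w - opoly_energy g m w\<bar> \<le> K * (\<Sum>i\<in>{m..<n}. variation i) + 3 * M * \<bar>g (Suc m) - g m\<bar>"
      unfolding K_def using m mn w by (intro energy_oscillation[OF N M M0]) auto
    then show "dist (opoly_energy g m w) (opoly_energy g n w) < e"
      using N1[of m n] N2[of m] m by (simp add: dist_real_def abs_minus_commute)
  qed
qed


lemma uniform_limit_cross_term:
  assumes R: "0 \<le> R"
  shows "uniform_limit {-R..R} (\<lambda>n w. w * opoly g n w * opoly g (Suc n) w) (\<lambda>_. 0) sequentially"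
proof -
  obtain N where N: "\<forall>k\<ge>N. regular R k"
    using eventually_regular[of R] unfolding eventually_sequentially by blast
  obtain M where M: "\<And>n w. N \<le> n \<Longrightarrow> \<bar>w\<bar> \<le> R \<Longrightarrow> opoly_energy g n w \<le> M"
    using energy_bounded[OF N] by blast
  have "norm (w * opoly g n w * opoly g (Suc n) w) \<le> R * M / g n"
    if n: "N \<le> n" and w: "w \<in> {-R..R}" for n w
  proof -
    have w': "\<bar>w\<bar> \<le> R" using w by auto
    have "g n * ((opoly g n w)\<^sup>2 + (opoly g (Suc n) w)\<^sup>2) \<le> 2 * M"
      using opoly_energy_lower[of w g n] M[OF n w'] n w' N by (force simp: regular_def)
    then have "((opoly g n w)\<^sup>2 + (opoly g (Suc n) w)\<^sup>2) / 2 \<le> M / g n"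
      using pos[of n] by (simp add: field_simps)
    then have "R * ((opoly g n w)\<^sup>2 + (opoly g (Suc n) w)\<^sup>2) / 2 \<le> R * M / g n"
      using mult_left_mono[OF _ R] by fastforce
    then show ?thesis
      using abs_mult3_le_half_sum_squares[OF w', of "opoly g n w" "opoly g (Suc n) w"]
      unfolding real_norm_def by linarith
  qed
  then have "\<forall>\<^sub>F n in sequentially. \<forall>w\<in>{-R..R}.
      norm (w * opoly g n w * opoly g (Suc n) w) \<le> R * M / g n"
    unfolding eventually_sequentially by blast
  moreover have "(\<lambda>n. R * M / g n) \<longlonglongrightarrow> 0"
    by (rule tendsto_divide_0[OF tendsto_const filterlim_at_top_imp_at_infinity[OF tendsto_at_top]])
  then have "uniform_limit {-R..R} (\<lambda>n w. R * M / g n) (\<lambda>_. 0) sequentially"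
    by (auto simp: uniform_limit_iff tendsto_iff elim!: eventually_mono)
  ultimately show ?thesis
    by (rule uniform_limit_null_comparison)
qed

definition scaled_mean_square :: "nat \<Rightarrow> real \<Rightarrow> real" where
  "scaled_mean_square n w = (1/2) * (g n * ((opoly g n w)\<^sup>2 + (opoly g (Suc n) w)\<^sup>2))"

lemma isCont_scaled_mean_square: "isCont (scaled_mean_square n) w"
proof -
  have "scaled_mean_square n = (\<lambda>w. (1/2) * (g n * ((opoly g n w)\<^sup>2 + (opoly g (Suc n) w)\<^sup>2)))"
    by (rule ext) (simp add: scaled_mean_square_def)
  then show ?thesis
    by (simp add: isCont_opoly continuous_intros)
qed

lemma uniformly_convergent_scaled_mean_square:
  assumes R: "0 \<le> R"
  shows "uniformly_convergent_on {-R..R} scaled_mean_square"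
proof -
  obtain \<Phi> where \<Phi>: "uniform_limit {-R..R} (opoly_energy g) \<Phi> sequentially"
    using Cauchy_uniformly_convergent[OF uniformly_Cauchy_energy[OF R]]
    unfolding uniformly_convergent_on_def by blast
  have "uniform_limit {-R..R}
      (\<lambda>n w. (opoly_energy g n w + w * opoly g n w * opoly g (Suc n) w) / 2)
      (\<lambda>w. (\<Phi> w + 0) / 2) sequentially"
    by (intro uniform_limit_intros \<Phi> uniform_limit_cross_term[OF R])
  moreover have "(\<lambda>n w. (opoly_energy g n w + w * opoly g n w * opoly g (Suc n) w) / 2)
      = scaled_mean_square"
    by (intro ext) (simp add: scaled_mean_square_def opoly_energy_def field_simps)
  ultimately show ?thesis
    unfolding uniformly_convergent_on_def by auto
qed

lemma eventually_opoly_square_bounded: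
  assumes R: "0 \<le> R"
  obtains M where "eventually (\<lambda>n. \<forall>w\<in>{-R..R}. (opoly g (Suc n) w)\<^sup>2 \<le> M) sequentially"
proof -
  obtain N where N: "\<forall>k\<ge>N. regular R k"
    using eventually_regular[of R] unfolding eventually_sequentially by blast
  obtain M where M: "\<And>n w. N \<le> n \<Longrightarrow> \<bar>w\<bar> \<le> R \<Longrightarrow> opoly_energy g n w \<le> M"
    using energy_bounded[OF N] by blast
  have "(opoly g (Suc n) w)\<^sup>2 \<le> M" if n: "N \<le> n" and w: "w \<in> {-R..R}" for n w
  proof -
    have w': "\<bar>w\<bar> \<le> R" and g2: "2 \<le> g n" and wg: "\<bar>w\<bar> \<le> g n"
      using w N n by (auto simp: regular_def)
    have "2 * (opoly g (Suc n) w)\<^sup>2 \<le> g n * ((opoly g n w)\<^sup>2 + (opoly g (Suc n) w)\<^sup>2)"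
      using g2 by (intro mult_mono) auto
    also have "\<dots> \<le> 2 * M"
      using opoly_energy_lower[of w g n, OF wg] M[OF n w'] by linarith
    finally show ?thesis by simp
  qed
  then show ?thesis
    using that unfolding eventually_sequentially by blast
qed

lemma uniform_limit_opoly_square_means:
  assumes diverges: "\<not> summable (\<lambda>k. 1 / g k)" and R: "0 \<le> R"
    and lim: "uniform_limit {-R..R} scaled_mean_square L sequentially"
  shows "uniform_limit {-R..R} (\<lambda>n w. (\<Sum>k\<le>n. (opoly g k w)\<^sup>2) / (\<Sum>k\<le>n. 1 / g k)) L sequentially"
proof -
  obtain M where M: "eventually (\<lambda>n. \<forall>w\<in>{-R..R}. (opoly g (Suc n) w)\<^sup>2 \<le> M) sequentially"
    using eventually_opoly_square_bounded[OF R] .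
  have "uniform_limit {-R..R} (\<lambda>n w. ((\<Sum>k\<le>n. 1 / g k * scaled_mean_square k w)
      + (1 - (opoly g (Suc n) w)\<^sup>2) / 2) / (\<Sum>k\<le>n. 1 / g k)) L sequentially"
  proof (rule uniform_limit_weighted_means[OF lim])
    show "bounded (scaled_mean_square k ` {-R..R})" for k
      by (intro compact_imp_bounded compact_continuous_image continuous_at_imp_continuous_on
          ballI isCont_scaled_mean_square compact_Icc)
    show "eventually (\<lambda>n. \<forall>w\<in>{-R..R}. \<bar>(1 - (opoly g (Suc n) w)\<^sup>2) / 2\<bar> \<le> (1 + \<bar>M\<bar>) / 2) sequentially"
    proof -
      have bound: "\<bar>(1 - y) / 2\<bar> \<le> (1 + \<bar>M\<bar>) / 2" if "0 \<le> y" "y \<le> M" for y :: real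
        using that abs_ge_self[of M] by (simp add: abs_le_iff)
      show ?thesis
        using M by eventually_elim (blast intro: bound zero_le_power2)
    qed
  qed (use pos diverges in auto)
  moreover have "(\<Sum>k\<le>n. 1 / g k * scaled_mean_square k w) + (1 - (opoly g (Suc n) w)\<^sup>2) / 2
      = (\<Sum>k\<le>n. (opoly g k w)\<^sup>2)" for n w
    unfolding sum_opoly_squares[of g w n] scaled_mean_square_def by simp
  ultimately show ?thesis by simp
qed

end

theorem corollary3:
  fixes \<gamma> :: "nat \<Rightarrow> real"
  assumes pos: "\<And>n. \<gamma> n > 0"
    and C1: "filterlim \<gamma> at_top sequentially"
    and C2: "(\<lambda>n. \<gamma> (Suc n) - \<gamma> n) \<longlonglongrightarrow> 0"
    and C3: "\<exists>n0 m0. \<forall>n\<ge>n0. \<forall>m\<ge>m0. \<gamma> (n + m) > \<gamma> n"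
    and C4: "\<not> summable (\<lambda>j. 1 / \<gamma> j)"
    and C5: "\<exists>\<kappa>>1. summable (\<lambda>j. \<gamma> j powr (-\<kappa>))"
    and C6: "summable (\<lambda>n. \<bar>\<gamma> (Suc n) - \<gamma> n\<bar> / (\<gamma> n)\<^sup>2)"
    and C7: "summable (\<lambda>n. \<bar>(\<gamma> (Suc (Suc n)) - \<gamma> (Suc n)) - (\<gamma> (Suc n) - \<gamma> n)\<bar> / \<gamma> n)"
  shows "\<exists>L :: real \<Rightarrow> real. \<forall>K. compact K \<longrightarrow>
           uniform_limit K
             (\<lambda>n w. (\<Sum>k\<le>n. (opoly \<gamma> k w)\<^sup>2) / (\<Sum>k\<le>n. 1 / \<gamma> k)) L sequentially \<and>
           uniform_limit K
             (\<lambda>n w. (1/2) * (\<gamma> n * ((opoly \<gamma> n w)\<^sup>2 + (opoly \<gamma> (Suc n) w)\<^sup>2))) L sequentially"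
proof -
  interpret jacobi_parameters \<gamma>
    using pos C1 C2 C6 C7 by unfold_locales
  define L where "L w = lim (\<lambda>n. scaled_mean_square n w)" for w
  have lim: "uniform_limit {-R..R} scaled_mean_square L sequentially" if "0 \<le> R" for R
    using uniformly_convergent_scaled_mean_square[OF that]
    unfolding uniformly_convergent_uniform_limit_iff L_def .
  have mean_square: "scaled_mean_square =
      (\<lambda>n w. (1/2) * (\<gamma> n * ((opoly \<gamma> n w)\<^sup>2 + (opoly \<gamma> (Suc n) w)\<^sup>2)))"
    by (intro ext) (simp add: scaled_mean_square_def)
  show ?thesis
  proof (intro exI allI impI)
    fix K :: "real set" assume "compact K"
    then obtain R where R: "0 \<le> R" and K: "K \<subseteq> {-R..R}"
      by (rule compact_subset_symmetric_interval)
    show "uniform_limit K (\<lambda>n w. (\<Sum>k\<le>n. (opoly \<gamma> k w)\<^sup>2) / (\<Sum>k\<le>n. 1 / \<gamma> k)) L sequentially \<and>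
        uniform_limit K (\<lambda>n w. (1/2) * (\<gamma> n * ((opoly \<gamma> n w)\<^sup>2 + (opoly \<gamma> (Suc n) w)\<^sup>2))) L sequentially"
      using uniform_limit_on_subset[OF uniform_limit_opoly_square_means[OF C4 R lim[OF R]] K]
        uniform_limit_on_subset[OF lim[OF R] K]
      unfolding mean_square by blast
  qed
qed

end
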